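(* Let $f:X\to\mathcal G$ be a convex function and $x_0\in\operatorname{dom} f$. For $x\in X$ and $t\in[0,1]$ write $x_t=x_0+t(x-x_0)$. Then $f(x_0)=\inf f[X]$ if and only if both of the following hold: (1) $x_0$ solves the strict set-valued Minty inequality, i.e. $f'(x,x_0-x)\supseteq 0^+f(x_0)$ for all $x\in X$ (equivalently $0\in f'(x,x_0-x)$ for all $x\in X$); and (2) for every $x\in X$ the function $t\mapsto f(x_t)$ on $[0,1]$ is lattice lower semicontinuous at $0$, i.e. $f(x_0)\supseteq \bigcap_{t_0\in(0,1)}\operatorname{cl}\operatorname{co}\bigcup_{t\in[0,t_0)}f(x_t)$. Moreover, if $x_0$ solves the strict scalarized Minty inequality, i.e. $\varphi'_{f,z^*}(x,x_0-x)\le 0$ for all $x\in X$ and all $z^*\in C^-\setminus\{0\}$, and for every $x\in X$ and every $z^*\in C^-\setminus\{0\}$ the function $t\mapsto\varphi_{f,z^*}(x_t)$ (for $t\in[0,1]$, and $+\infty$ for $t\notin[0,1]$) is lower semicontinuous at $t=0$, then $f(x_0)=\inf f[X]$.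
   Context: $X$ is a real linear space and $Z$ a real locally convex Hausdorff space with topological dual $Z^*$. $C\subseteq Z$ is a closed convex cone with $0\in C$ such that $C^-=\{z^*\in Z^*: z^*(c)\le 0\ \forall c\in C\}$ satisfies $C^-\setminus\{0\}\ne\emptyset$. Let $\mathcal G=\{A\subseteq Z: A=\operatorname{cl}\operatorname{co}(A+C)\}$ (it contains $\emptyset$ and $Z$). For $A,B\in\mathcal G$: $A\oplus B=\operatorname{cl}\{a+b\}$, $tA=\{ta:a\in A\}$ for $t>0$, and $A\ominus B=\{z\in Z: B+\{z\}\subseteq A\}$ (so $A\ominus\emptyset=Z$). The recession cone is $0^+A=\{z: A+\{z\}\subseteq A\}$ for $A\neq\emptyset$, $0^+\emptyset=\emptyset$. A function $f:X\to\mathcal G$ is convex if $f(tx_1+(1-t)x_2)\supseteq tf(x_1)\oplus(1-t)f(x_2)$ for all $x_1,x_2$, $t\in(0,1)$; $\operatorname{dom} f=\{x: f(x)\neq\emptyset\}$; $\inf f[X]=\operatorname{cl}\operatorname{co}\bigcup_{x}f(x)$. The directional derivative is $f'(x,u)=\bigcap_{t_0>0}\operatorname{cl}\operatorname{co}\bigcup_{0<t<t_0}\frac1t\big(f(x+tu)\ominus f(x)\big)$. On $\overline{\mathbb R}$ use inf-addition $\dot+$ ($+\infty$ dominates: $(-\infty)\dot+(+\infty)=+\infty$) and $r\ominus s=\inf\{t\in\mathbb R: r\le s\dot+t\}$ ($\inf\emptyset=+\infty$). For $z^*\in C^-\setminus\{0\}$, $\varphi_{f,z^*}(x)=\inf\{-z^*(z):z\in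 f(x)\}$ ($+\infty$ if $f(x)=\emptyset$), and $\varphi'_{f,z^*}(x,u)=\inf_{t>0}\frac1t\big(\varphi_{f,z^*}(x+tu)\ominus\varphi_{f,z^*}(x)\big)$. *)

theory Defs
  imports "HOL-Analysis.Analysis" "HOL-Library.Extended_Real"
begin

definition lc_tvs :: "('z::{real_vector, t2_space}) itself \<Rightarrow> bool" where
  "lc_tvs _ \<longleftrightarrow>
     continuous_on UNIV (\<lambda>(a::'z, b::'z). a + b) \<and>
     continuous_on UNIV (\<lambda>(r::real, a::'z). r *\<^sub>R a) \<and>
     (\<forall>U::'z set. open U \<and> 0 \<in> U \<longrightarrow> (\<exists>V. open V \<and> convex V \<and> 0 \<in> V \<and> V \<subseteq> U))"

definition top_dual :: "('z::{real_vector, topological_space} \<Rightarrow> real) set" where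
  "top_dual = {zs. linear zs \<and> continuous_on UNIV zs}"

definition neg_dual_cone :: "'z::{real_vector, topological_space} set \<Rightarrow> ('z \<Rightarrow> real) set" where
  "neg_dual_cone C = {zs \<in> top_dual. \<forall>c\<in>C. zs c \<le> 0}"

definition setplus :: "'z::real_vector set \<Rightarrow> 'z set \<Rightarrow> 'z set" where
  "setplus A B = {a + b | a b. a \<in> A \<and> b \<in> B}"

definition inG :: "'z::{real_vector, topological_space} set \<Rightarrow> 'z set \<Rightarrow> bool" where
  "inG C A \<longleftrightarrow> A = closure (convex hull (setplus A C))"

definition oplusG :: "'z::{real_vector, topological_space} set \<Rightarrow> 'z set \<Rightarrow> 'z set" where
  "oplusG A B = closure (setplus A B)"

definition scaleG :: "real \<Rightarrow> 'z::real_vector set \<Rightarrow> 'z set" where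
  "scaleG t A = (\<lambda>a. t *\<^sub>R a) ` A"

definition ominusG :: "'z::real_vector set \<Rightarrow> 'z set \<Rightarrow> 'z set" where
  "ominusG A B = {z. setplus B {z} \<subseteq> A}"

definition recc :: "'z::real_vector set \<Rightarrow> 'z set" where
  "recc A = (if A = {} then {} else {z. setplus A {z} \<subseteq> A})"

definition convex_G_fun :: "('x::real_vector \<Rightarrow> 'z::{real_vector, topological_space} set) \<Rightarrow> bool" where
  "convex_G_fun f \<longleftrightarrow> (\<forall>x1 x2 t. 0 < t \<and> t < 1 \<longrightarrow>
      oplusG (scaleG t (f x1)) (scaleG (1 - t) (f x2)) \<subseteq> f (t *\<^sub>R x1 + (1 - t) *\<^sub>R x2))"

definition dom_G :: "('x \<Rightarrow> 'z set) \<Rightarrow> 'x set" where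
  "dom_G f = {x. f x \<noteq> {}}"

definition inf_G :: "('x \<Rightarrow> 'z::{real_vector, topological_space} set) \<Rightarrow> 'z set" where
  "inf_G f = closure (convex hull (\<Union>x. f x))"

definition dderiv_G :: "('x::real_vector \<Rightarrow> 'z::{real_vector, topological_space} set) \<Rightarrow> 'x \<Rightarrow> 'x \<Rightarrow> 'z set" where
  "dderiv_G f x u = (\<Inter>t0\<in>{0<..}. closure (convex hull
      (\<Union>t\<in>{0<..<t0}. scaleG (1 / t) (ominusG (f (x + t *\<^sub>R u)) (f x)))))"

definition iplus :: "ereal \<Rightarrow> ereal \<Rightarrow> ereal" where
  "iplus r s = (if r = \<infinity> \<or> s = \<infinity> then \<infinity> else r + s)"

definition iminus :: "ereal \<Rightarrow> ereal \<Rightarrow> ereal" where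
  "iminus r s = Inf {ereal t | t. r \<le> iplus s (ereal t)}"

definition scal :: "('x \<Rightarrow> 'z set) \<Rightarrow> ('z \<Rightarrow> real) \<Rightarrow> 'x \<Rightarrow> ereal" where
  "scal f zs x = Inf ((\<lambda>z. ereal (- zs z)) ` f x)"

definition scal_dderiv :: "('x::real_vector \<Rightarrow> 'z set) \<Rightarrow> ('z \<Rightarrow> real) \<Rightarrow> 'x \<Rightarrow> 'x \<Rightarrow> ereal" where
  "scal_dderiv f zs x u = Inf {ereal (1 / t) * iminus (scal f zs (x + t *\<^sub>R u)) (scal f zs x) | t. 0 < t}"

end

theory Submission
  imports Defs
begin

text \<open>If \<open>f x\<^sub>0\<close> is the infimum, then every value \<open>f x\<close> lies in \<open>f x\<^sub>0\<close>; convexity of \<open>f\<close>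
  then puts \<open>f x + t z\<close> into \<open>f (x + t (x\<^sub>0 - x))\<close> for every recession direction \<open>z\<close> of
  \<open>f x\<^sub>0\<close>, which is the Minty inequality, and semicontinuity at \<open>x\<^sub>0\<close> is immediate.
  Conversely, either form of the Minty inequality says that every scalarization
  \<open>\<phi>(t) = \<phi>\<^sub>f\<^sub>,\<^sub>z(x\<^sub>t)\<close> has nonpositive slope towards \<open>t = 0\<close>; as \<open>\<phi>\<close> is convex and finite at
  \<open>0\<close>, a chord argument gives \<open>\<phi>(t) \<le> \<phi>(1)\<close> for \<open>0 < t < 1\<close>, and semicontinuity at \<open>0\<close>
  carries this to \<open>x\<^sub>0\<close>. Values of \<open>f\<close> are closed, convex and stable under adding \<open>C\<close>, so
  by the separation theorem in locally convex spaces (Hahn--Banach applied to a Minkowski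
  functional) they are ordered by inclusion exactly as their scalarizations over
  \<open>C\<^sup>- - {0}\<close> are ordered; hence \<open>f x \<subseteq> f x\<^sub>0\<close> for all \<open>x\<close>.\<close>

section \<open>Hahn--Banach for sublinear functionals\<close>

definition sublinear :: "('a::real_vector \<Rightarrow> real) \<Rightarrow> bool" where
  "sublinear p \<longleftrightarrow>
     (\<forall>x y. p (x + y) \<le> p x + p y) \<and> (\<forall>c x. 0 < c \<longrightarrow> p (c *\<^sub>R x) = c * p x)"

lemma sublinear_add_le: "sublinear p \<Longrightarrow> p (x + y) \<le> p x + p y"
  unfolding sublinear_def by blast

lemma sublinear_scaleR: "sublinear p \<Longrightarrow> 0 < c \<Longrightarrow> p (c *\<^sub>R x) = c * p x"
  unfolding sublinear_def by blast

lemma sublinear_zero: "sublinear p \<Longrightarrow> p 0 = 0"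
  using sublinear_scaleR[of p 2 0] by simp

lemma sublinear_scaleR_ge:
  assumes p: "sublinear p" shows "t * p e \<le> p (t *\<^sub>R e)"
proof (cases "0 < t")
  case True thus ?thesis using sublinear_scaleR[OF p] by simp
next
  case False
  have "0 \<le> p e + p (- e)" using sublinear_add_le[OF p, of e "- e"] sublinear_zero[OF p] by simp
  hence "t * (p e + p (- e)) \<le> 0" using False by (simp add: mult_nonpos_nonneg)
  moreover have "p (t *\<^sub>R e) = - t * p (- e)" if "t < 0"
    using sublinear_scaleR[OF p, of "- t" "- e"] that by simp
  ultimately show ?thesis using False sublinear_zero[OF p]
    by (cases "t = 0") (auto simp: algebra_simps)
qed

text \<open>A subspace of \<open>X \<times> \<real>\<close> lying below the graph of \<open>p\<close> is automatically the graph
  of a linear functional on a subspace of \<open>X\<close>, by \<open>dominated_graph_unique\<close>.\<close>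

definition dominated_graph :: "('a::real_vector \<Rightarrow> real) \<Rightarrow> ('a \<times> real) set \<Rightarrow> bool" where
  "dominated_graph p M \<longleftrightarrow> subspace M \<and> (\<forall>x a. (x, a) \<in> M \<longrightarrow> a \<le> p x)"

lemma dominated_graph_unique:
  assumes p: "sublinear p" and M: "dominated_graph p M" and "(x, a) \<in> M" "(x, b) \<in> M"
  shows "a = b"
proof -
  have sub: "subspace M" and dom: "\<And>x a. (x, a) \<in> M \<Longrightarrow> a \<le> p x"
    using M unfolding dominated_graph_def by auto
  have "(0, a - b) \<in> M" "(0, b - a) \<in> M"
    using subspace_diff[OF sub assms(3) assms(4)] subspace_diff[OF sub assms(4) assms(3)] by simp_all
  thus ?thesis using dom[of 0 "a - b"] dom[of 0 "b - a"] sublinear_zero[OF p] by simp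
qed

lemma dominated_extension_bounds:
  assumes p: "sublinear p" and M: "dominated_graph p M"
  shows "\<exists>c. \<forall>x a. (x, a) \<in> M \<longrightarrow> a - p (x - y) \<le> c \<and> c \<le> p (x + y) - a"
proof -
  have sub: "subspace M" and dom: "\<And>x a. (x, a) \<in> M \<Longrightarrow> a \<le> p x"
    using M unfolding dominated_graph_def by auto
  have key: "a1 - p (x1 - y) \<le> p (x2 + y) - a2" if "(x1, a1) \<in> M" "(x2, a2) \<in> M" for x1 x2 a1 a2
  proof -
    have "a1 + a2 \<le> p (x1 + x2)" using dom subspace_add[OF sub that] by simp
    also have "\<dots> \<le> p (x1 - y) + p (x2 + y)"
      using sublinear_add_le[OF p, of "x1 - y" "x2 + y"] by simp
    finally show ?thesis by simp
  qed
  define S where "S = (\<lambda>(x, a). a - p (x - y)) ` M"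
  have "(0, 0) \<in> M" using subspace_0[OF sub] by (simp add: zero_prod_def)
  hence "S \<noteq> {}" and "bdd_above S"
    unfolding S_def bdd_above_def using key by fastforce+
  have "a - p (x - y) \<le> Sup S" if "(x, a) \<in> M" for x a
    using cSup_upper[OF _ \<open>bdd_above S\<close>] that unfolding S_def by force
  moreover have "Sup S \<le> p (x + y) - a" if "(x, a) \<in> M" for x a
    using cSup_least[OF \<open>S \<noteq> {}\<close>] key that unfolding S_def by force
  ultimately show ?thesis by blast
qed

text \<open>Positive homogeneity of \<open>p\<close> turns the bounds at \<open>\<pm>y\<close> into bounds at every multiple of \<open>y\<close>.\<close>
lemma dominated_extension_constant:
  assumes p: "sublinear p" and M: "dominated_graph p M"
  shows "\<exists>c. \<forall>x a t. (x, a) \<in> M \<longrightarrow> a + t * c \<le> p (x + t *\<^sub>R y)"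
proof -
  have sub: "subspace M" and dom: "\<And>x a. (x, a) \<in> M \<Longrightarrow> a \<le> p x"
    using M unfolding dominated_graph_def by auto
  obtain c where c: "\<And>x a. (x, a) \<in> M \<Longrightarrow> a - p (x - y) \<le> c \<and> c \<le> p (x + y) - a"
    using dominated_extension_bounds[OF p M, of y] by blast
  have "a + t * c \<le> p (x + t *\<^sub>R y)" if xa: "(x, a) \<in> M" for x a t
  proof -
    have scaled: "(inverse u *\<^sub>R x, inverse u * a) \<in> M" for u
      using subspace_scale[OF sub xa, of "inverse u"] by simp
    consider "0 < t" | "t = 0" | "t < 0" by linarith
    then show ?thesis
    proof cases
      case 1
      have "c \<le> p (inverse t *\<^sub>R x + y) - inverse t * a" using c[OF scaled[of t]] by simp
      hence "t * c \<le> t * p (inverse t *\<^sub>R x + y) - a"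
        using 1 by (simp add: field_simps)
      moreover have "t *\<^sub>R (inverse t *\<^sub>R x + y) = x + t *\<^sub>R y"
        using 1 by (simp add: scaleR_add_right)
      ultimately show ?thesis using sublinear_scaleR[OF p 1, of "inverse t *\<^sub>R x + y"] by simp
    next
      case 2 thus ?thesis using dom[OF xa] by simp
    next
      case 3
      have "inverse (- t) * a - p (inverse (- t) *\<^sub>R x - y) \<le> c" using c[OF scaled[of "- t"]] by simp
      hence "a + t * p (inverse (- t) *\<^sub>R x - y) \<le> - t * c"
        using 3 by (simp add: field_simps)
      moreover have "(- t) *\<^sub>R (inverse (- t) *\<^sub>R x - y) = x + t *\<^sub>R y"
        using 3 by (simp add: scaleR_diff_right)
      ultimately show ?thesis using sublinear_scaleR[OF p, of "- t" "inverse (- t) *\<^sub>R x - y"] 3 by simp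
    qed
  qed
  thus ?thesis by blast
qed

lemma dominated_graph_extend:
  assumes p: "sublinear p" and M: "dominated_graph p M"
  shows "\<exists>M' c. dominated_graph p M' \<and> M \<subseteq> M' \<and> (y, c) \<in> M'"
proof -
  have sub: "subspace M" using M unfolding dominated_graph_def by auto
  obtain c where c: "\<And>x a t. (x, a) \<in> M \<Longrightarrow> a + t * c \<le> p (x + t *\<^sub>R y)"
    using dominated_extension_constant[OF p M, of y] by blast
  define M' where "M' = {m + v | m v. m \<in> M \<and> v \<in> span {(y, c)}}"
  have "subspace M'" unfolding M'_def by (intro subspace_sums sub subspace_span)
  moreover have "a \<le> p x" if xa: "(x, a) \<in> M'" for x a
  proof -
    obtain x' a' k where "(x', a') \<in> M" "x = x' + k *\<^sub>R y" "a = a' + k * c"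
      using xa unfolding M'_def span_singleton by auto
    thus ?thesis using c[of x' a' k] by simp
  qed
  moreover have "M \<subseteq> M'"
  proof
    fix m assume "m \<in> M"
    have "m = m + 0" by simp
    thus "m \<in> M'" unfolding M'_def using \<open>m \<in> M\<close> span_zero by blast
  qed
  moreover have "(y, c) \<in> M'"
  proof -
    have "(y, c) = 0 + (y, c)" by simp
    thus ?thesis unfolding M'_def using subspace_0[OF sub] span_base[of "(y, c)"] by blast
  qed
  ultimately show ?thesis unfolding dominated_graph_def by blast
qed

lemma subspace_Union_chain:
  assumes "C \<noteq> {}" "\<And>S. S \<in> C \<Longrightarrow> subspace S" "\<And>S T. S \<in> C \<Longrightarrow> T \<in> C \<Longrightarrow> S \<subseteq> T \<or> T \<subseteq> S"
  shows "subspace (\<Union>C)"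
  unfolding subspace_def
proof (intro conjI ballI allI)
  show "0 \<in> \<Union>C" using assms(1,2) subspace_0 by blast
next
  fix x y assume "x \<in> \<Union>C" "y \<in> \<Union>C"
  then obtain S T where "S \<in> C" "T \<in> C" "x \<in> S" "y \<in> T" by blast
  thus "x + y \<in> \<Union>C" using assms(2,3) subspace_add by blast
next
  fix c x assume "x \<in> \<Union>C"
  thus "c *\<^sub>R x \<in> \<Union>C" using assms(2) subspace_scale by blast
qed

lemma dominated_graph_function:
  assumes p: "sublinear p" and M: "dominated_graph p M" and total: "\<And>x. \<exists>a. (x, a) \<in> M"
  shows "\<exists>l. linear l \<and> (\<forall>x a. (x, a) \<in> M \<longleftrightarrow> l x = a)"
proof -
  have sub: "subspace M" using M unfolding dominated_graph_def by blast
  define l where "l x = (THE a. (x, a) \<in> M)" for x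
  have l_eq: "l x = a \<longleftrightarrow> (x, a) \<in> M" for x a
    using theI[of "\<lambda>a. (x, a) \<in> M"] total[of x] dominated_graph_unique[OF p M, of x]
    unfolding l_def by blast
  have lM: "(x, l x) \<in> M" for x using l_eq[of x "l x"] by simp
  have "linear l"
  proof (rule linearI)
    show "l (x + y) = l x + l y" for x y using l_eq subspace_add[OF sub lM lM] by simp
    show "l (r *\<^sub>R x) = r *\<^sub>R l x" for r x using l_eq subspace_scale[OF sub lM, of r] by simp
  qed
  thus ?thesis using l_eq by blast
qed

theorem hahn_banach_sublinear:
  assumes p: "sublinear p"
  shows "\<exists>l. linear l \<and> (\<forall>x. l x \<le> p x) \<and> l e = p e"
proof -
  define F where "F = {M. dominated_graph p M \<and> (e, p e) \<in> M}"
  have "\<forall>x a. (x, a) \<in> span {(e, p e)} \<longrightarrow> a \<le> p x"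
    unfolding span_singleton using sublinear_scaleR_ge[OF p] by auto
  hence "span {(e, p e)} \<in> F"
    unfolding F_def dominated_graph_def by (simp add: span_base)
  moreover have "\<Union>Ch \<in> F" if Ch: "Ch \<noteq> {}" "subset.chain F Ch" for Ch
  proof -
    have "Ch \<subseteq> F" and chain: "\<And>S T. S \<in> Ch \<Longrightarrow> T \<in> Ch \<Longrightarrow> S \<subseteq> T \<or> T \<subseteq> S"
      using Ch(2) unfolding subset.chain_def by auto
    hence "subspace S" "\<forall>x a. (x, a) \<in> S \<longrightarrow> a \<le> p x" "(e, p e) \<in> S" if "S \<in> Ch" for S
      using that unfolding F_def dominated_graph_def by auto
    thus ?thesis using subspace_Union_chain[OF Ch(1) _ chain] Ch(1)
      unfolding F_def dominated_graph_def by blast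
  qed
  ultimately obtain M where "M \<in> F" and max: "\<And>X. X \<in> F \<Longrightarrow> M \<subseteq> X \<Longrightarrow> X = M"
    using subset_Zorn_nonempty[of F] by blast
  hence M: "dominated_graph p M" and Me: "(e, p e) \<in> M" unfolding F_def by auto
  have "\<exists>a. (x, a) \<in> M" for x
  proof -
    obtain M' c where "dominated_graph p M'" "M \<subseteq> M'" "(x, c) \<in> M'"
      using dominated_graph_extend[OF p M] by blast
    moreover from this have "M' \<in> F" using Me unfolding F_def by blast
    ultimately show ?thesis using max[of M'] by blast
  qed
  then obtain l where "linear l" and l: "\<And>x a. (x, a) \<in> M \<longleftrightarrow> l x = a"
    using dominated_graph_function[OF p M] by blast
  moreover have "l x \<le> p x" for x using M l[of x "l x"] unfolding dominated_graph_def by blast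
  ultimately show ?thesis using l Me by blast
qed

section \<open>Separation in locally convex spaces\<close>

definition minkowski_functional :: "'a::real_vector set \<Rightarrow> 'a \<Rightarrow> real" where
  "minkowski_functional K z = Inf {t. 0 < t \<and> inverse t *\<^sub>R z \<in> K}"

lemma minkowski_functional_le:
  "0 < t \<Longrightarrow> inverse t *\<^sub>R z \<in> K \<Longrightarrow> minkowski_functional K z \<le> t"
  unfolding minkowski_functional_def by (rule cInf_lower) (auto intro: bdd_belowI[of _ 0])

lemma convex_scaleR_inverse_mono:
  assumes K: "convex K" "0 \<in> K" and t: "0 < t" "inverse t *\<^sub>R z \<in> K" and "t \<le> s"
  shows "inverse s *\<^sub>R z \<in> K"
proof -
  have "(t / s) *\<^sub>R (inverse t *\<^sub>R z) + (1 - t / s) *\<^sub>R 0 \<in> K"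
    using assms by (intro convexD[OF K(1) t(2) K(2)]) auto
  moreover have "(t / s) * inverse t = inverse s" using assms by (simp add: field_simps)
  ultimately show ?thesis by simp
qed

context
  fixes dummy :: "'z::{real_vector, t2_space} itself"
  assumes lc: "lc_tvs TYPE('z)"
begin

lemma continuous_on_add_lc:
  fixes f g :: "'a::topological_space \<Rightarrow> 'z"
  assumes "continuous_on UNIV f" "continuous_on UNIV g"
  shows "continuous_on UNIV (\<lambda>x. f x + g x)"
proof -
  have "continuous_on UNIV (\<lambda>(a::'z, b::'z). a + b)" using lc unfolding lc_tvs_def by blast
  from continuous_on_compose2[OF this continuous_on_Pair[OF assms]] show ?thesis by simp
qed

lemma continuous_on_scaleR_lc:
  fixes f :: "'a::topological_space \<Rightarrow> real" and g :: "'a \<Rightarrow> 'z"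
  assumes "continuous_on UNIV f" "continuous_on UNIV g"
  shows "continuous_on UNIV (\<lambda>x. f x *\<^sub>R g x)"
proof -
  have "continuous_on UNIV (\<lambda>(r::real, a::'z). r *\<^sub>R a)" using lc unfolding lc_tvs_def by blast
  from continuous_on_compose2[OF this continuous_on_Pair[OF assms]] show ?thesis by simp
qed

lemma open_affine_vimage: "open K \<Longrightarrow> open {y::'z. c *\<^sub>R (y + d) \<in> K}"
  using open_vimage[of K "\<lambda>y. c *\<^sub>R (y + d)"]
  by (simp add: vimage_def continuous_on_scaleR_lc continuous_on_add_lc)

lemma open_scaleR_ray_gt:
  assumes "open (K::'z set)" "r *\<^sub>R z \<in> K"
  shows "\<exists>s>r. s *\<^sub>R z \<in> K"
proof -
  have "open {s::real. s *\<^sub>R z \<in> K}"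
    using open_vimage[OF assms(1), of "\<lambda>s. s *\<^sub>R z"]
    by (simp add: vimage_def continuous_on_scaleR_lc)
  then obtain e where "e > 0" "ball r e \<subseteq> {s. s *\<^sub>R z \<in> K}"
    using assms(2) open_contains_ball_eq by blast
  moreover have "r + e / 2 \<in> ball r e" using \<open>e > 0\<close> by (simp add: dist_real_def)
  ultimately show ?thesis using \<open>e > 0\<close> by (intro exI[of _ "r + e / 2"]) auto
qed

lemma convex_closure_lc:
  assumes "convex (S::'z set)" shows "convex (closure S)"
  unfolding convex_def
proof (intro ballI allI impI)
  fix x y and u v :: real
  assume xy: "x \<in> closure S" "y \<in> closure S" and uv: "0 \<le> u" "0 \<le> v" "u + v = 1"
  define F where "F q = u *\<^sub>R fst q + v *\<^sub>R snd q" for q :: "'z \<times> 'z"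
  have "continuous_on UNIV F" unfolding F_def
    by (intro continuous_on_add_lc continuous_on_scaleR_lc continuous_on_const continuous_on_fst
        continuous_on_snd continuous_on_id)
  moreover have "F ` (S \<times> S) \<subseteq> closure S"
    using convexD[OF assms _ _ uv] unfolding F_def by (force intro: subsetD[OF closure_subset])
  ultimately have "F ` closure (S \<times> S) \<subseteq> closure S"
    by (intro image_closure_subset) (auto intro: continuous_on_subset)
  moreover have "(x, y) \<in> closure (S \<times> S)" using xy by (simp add: closure_Times)
  ultimately have "F (x, y) \<in> closure S" by blast
  thus "u *\<^sub>R x + v *\<^sub>R y \<in> closure S" unfolding F_def by simp
qed

context
  fixes K :: "'z set"
  assumes K: "open K" "convex K" "0 \<in> K"
begin

lemma minkowski_functional_nonempty: "{t. 0 < t \<and> inverse t *\<^sub>R z \<in> K} \<noteq> {}"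
proof -
  obtain s where "s > 0" "s *\<^sub>R z \<in> K" using open_scaleR_ray_gt[of K 0 z] K by auto
  thus ?thesis by (intro ex_in_conv[THEN iffD1] exI[of _ "inverse s"]) auto
qed

lemma minkowski_functional_nonneg: "0 \<le> minkowski_functional K z"
  unfolding minkowski_functional_def by (rule cInf_greatest[OF minkowski_functional_nonempty]) auto

lemma minkowski_functional_less:
  assumes "minkowski_functional K z < s" shows "inverse s *\<^sub>R z \<in> K"
proof -
  obtain t where "0 < t" "inverse t *\<^sub>R z \<in> K" "t < s"
    using assms unfolding minkowski_functional_def
    by (subst (asm) cInf_less_iff[OF minkowski_functional_nonempty]) (auto intro: bdd_belowI[of _ 0])
  thus ?thesis using convex_scaleR_inverse_mono[OF K(2,3)] by simp
qed

lemma minkowski_functional_lt_1: "z \<in> K \<Longrightarrow> minkowski_functional K z < 1"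
proof -
  assume "z \<in> K"
  then obtain s where "s > 1" "s *\<^sub>R z \<in> K" using open_scaleR_ray_gt[of K 1 z] K by auto
  hence "minkowski_functional K z \<le> inverse s" by (intro minkowski_functional_le) auto
  also have "\<dots> < 1" using \<open>s > 1\<close> by (simp add: field_simps)
  finally show ?thesis .
qed

lemma minkowski_functional_ge_1: "z \<notin> K \<Longrightarrow> 1 \<le> minkowski_functional K z"
  using minkowski_functional_less[of z 1] by force

lemma minkowski_functional_add_le:
  "minkowski_functional K (x + y) \<le> minkowski_functional K x + minkowski_functional K y"
proof (rule field_le_epsilon)
  fix e :: real assume e: "0 < e"
  define s where "s = minkowski_functional K x + e / 2"
  define t where "t = minkowski_functional K y + e / 2"
  have st: "0 < s" "0 < t"
    using minkowski_functional_nonneg e unfolding s_def t_def by (simp_all add: add_nonneg_pos)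
  have "inverse s *\<^sub>R x \<in> K" "inverse t *\<^sub>R y \<in> K"
    using minkowski_functional_less e unfolding s_def t_def by simp_all
  hence "(s / (s + t)) *\<^sub>R (inverse s *\<^sub>R x) + (t / (s + t)) *\<^sub>R (inverse t *\<^sub>R y) \<in> K"
    using st by (intro convexD[OF K(2)]) (auto simp: divide_simps)
  moreover have "(s / (s + t)) *\<^sub>R (inverse s *\<^sub>R x) + (t / (s + t)) *\<^sub>R (inverse t *\<^sub>R y)
      = inverse (s + t) *\<^sub>R (x + y)"
    using st by (simp add: scaleR_add_right field_simps)
  ultimately have "minkowski_functional K (x + y) \<le> s + t"
    using st by (intro minkowski_functional_le) auto
  thus "minkowski_functional K (x + y) \<le> minkowski_functional K x + minkowski_functional K y + e"
    unfolding s_def t_def by simp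
qed

lemma minkowski_functional_scaleR_le:
  assumes c: "0 < c" shows "minkowski_functional K (c *\<^sub>R z) \<le> c * minkowski_functional K z"
proof -
  have "minkowski_functional K (c *\<^sub>R z) \<le> c * minkowski_functional K z + e" if e: "0 < e" for e
  proof -
    define s where "s = minkowski_functional K z + e / c"
    have s: "0 < s" using minkowski_functional_nonneg[of z] e c unfolding s_def
      by (simp add: add_nonneg_pos)
    have mem: "inverse s *\<^sub>R z \<in> K" using minkowski_functional_less e c unfolding s_def by simp
    have "inverse (c * s) * c = inverse s" using c s by (simp add: field_simps)
    hence "inverse (c * s) *\<^sub>R (c *\<^sub>R z) \<in> K" using mem by (simp only: scaleR_scaleR)
    hence "minkowski_functional K (c *\<^sub>R z) \<le> c * s"
      using s c by (intro minkowski_functional_le) auto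
    thus ?thesis unfolding s_def using c by (simp add: distrib_left)
  qed
  thus ?thesis by (rule field_le_epsilon)
qed

lemma sublinear_minkowski_functional: "sublinear (minkowski_functional K)"
  unfolding sublinear_def
proof (intro conjI allI impI minkowski_functional_add_le)
  fix c :: real and z assume c: "0 < c"
  have "minkowski_functional K (c *\<^sub>R z) \<le> c * minkowski_functional K z"
    by (rule minkowski_functional_scaleR_le[OF c])
  moreover have "minkowski_functional K z \<le> inverse c * minkowski_functional K (c *\<^sub>R z)"
    using minkowski_functional_scaleR_le[of "inverse c" "c *\<^sub>R z"] c by simp
  hence "c * minkowski_functional K z \<le> minkowski_functional K (c *\<^sub>R z)"
    using c by (simp add: field_simps)
  ultimately show "minkowski_functional K (c *\<^sub>R z) = c * minkowski_functional K z" by simp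
qed

end

lemma continuous_on_linear_bounded_on_open:
  fixes l :: "'z \<Rightarrow> real"
  assumes l: "linear l" and K: "open K" "0 \<in> K" and bound: "\<forall>k\<in>K. l k < 1"
  shows "continuous_on UNIV l"
  unfolding continuous_on_open_vimage[OF open_UNIV]
proof (intro allI impI)
  fix B :: "real set" assume B: "open B"
  have "\<exists>T. open T \<and> z \<in> T \<and> T \<subseteq> l -` B" if "l z \<in> B" for z
  proof -
    obtain e where e: "e > 0" "ball (l z) e \<subseteq> B" using B \<open>l z \<in> B\<close> open_contains_ball_eq by blast
    \<comment> \<open>\<open>T = z + (e/2) (K \<inter> -K)\<close>, written as preimages under continuous affine maps\<close>
    define T where "T = {y. (2 / e) *\<^sub>R (y + - z) \<in> K} \<inter> {y. (- (2 / e)) *\<^sub>R (y + - z) \<in> K}"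
    have "open T" unfolding T_def using K by (intro open_Int open_affine_vimage)
    moreover have "z \<in> T" unfolding T_def using K by simp
    moreover have "l y \<in> B" if "y \<in> T" for y
    proof -
      have "(2 / e) *\<^sub>R (y - z) \<in> K" "(- (2 / e)) *\<^sub>R (y - z) \<in> K"
        using that unfolding T_def by simp_all
      hence "l ((2 / e) *\<^sub>R (y - z)) < 1" "l ((- (2 / e)) *\<^sub>R (y - z)) < 1" using bound by blast+
      hence "(2 / e) * (l y - l z) < 1" "- (2 / e) * (l y - l z) < 1"
        by (simp_all only: linear_scale[OF l] linear_diff[OF l] real_scaleR_def)
      hence "dist (l y) (l z) < e" using e(1) by (simp add: dist_real_def field_simps abs_less_iff)
      thus ?thesis using e(2) by (auto simp: dist_commute)
    qed
    ultimately show ?thesis by blast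
  qed
  thus "open (l -` B \<inter> UNIV)" by (subst open_subopen) auto
qed

lemma separation_open_convex:
  fixes K :: "'z set"
  assumes K: "open K" "convex K" "0 \<in> K" and e: "e \<notin> K"
  shows "\<exists>l::'z \<Rightarrow> real. linear l \<and> continuous_on UNIV l \<and> 1 \<le> l e \<and> (\<forall>k\<in>K. l k < 1)"
proof -
  obtain l where l: "linear l" "\<And>x. l x \<le> minkowski_functional K x"
      "l e = minkowski_functional K e"
    using hahn_banach_sublinear[OF sublinear_minkowski_functional[OF K]] by blast
  have bound: "\<forall>k\<in>K. l k < 1"
    using l(2) minkowski_functional_lt_1[OF K] le_less_trans by blast
  moreover have "1 \<le> l e" using l(3) minkowski_functional_ge_1[OF K e] by simp
  ultimately show ?thesis
    using l(1) continuous_on_linear_bounded_on_open[OF l(1) K(1,3) bound] by blast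
qed

lemma convex_open_nbhd_avoiding_closed:
  fixes A :: "'z set"
  assumes "closed A" "b \<notin> A"
  obtains W where "open W" "convex W" "0 \<in> W" "\<And>w. w \<in> W \<Longrightarrow> b - w \<notin> A"
proof -
  have "open {u. (- 1) *\<^sub>R (u + - b) \<in> - A}" using assms(1) by (intro open_affine_vimage) auto
  then obtain W where "open W" "convex W" "0 \<in> W" and "W \<subseteq> {u. (- 1) *\<^sub>R (u + - b) \<in> - A}"
    using lc assms(2) unfolding lc_tvs_def by auto
  thus ?thesis using that[of W] by (auto simp: algebra_simps)
qed

lemma open_convex_thickening:
  fixes A W :: "'z set" and c :: 'z
  assumes A: "convex A" and W: "open W" "convex W"
  defines "K \<equiv> {a - c + w | a w. a \<in> A \<and> w \<in> W}"
  shows "open K" "convex K"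
proof -
  have "y \<in> K \<longleftrightarrow> (\<exists>a\<in>A. 1 *\<^sub>R (y + (c - a)) \<in> W)" for y
  proof
    assume "y \<in> K"
    then obtain a w where "a \<in> A" "w \<in> W" "y = a - c + w" unfolding K_def by blast
    moreover from this have "1 *\<^sub>R (y + (c - a)) = w" by simp
    ultimately show "\<exists>a\<in>A. 1 *\<^sub>R (y + (c - a)) \<in> W" by metis
  next
    assume "\<exists>a\<in>A. 1 *\<^sub>R (y + (c - a)) \<in> W"
    then obtain a where "a \<in> A" "y + (c - a) \<in> W" by auto
    moreover have "y = a - c + (y + (c - a))" by (simp add: algebra_simps)
    ultimately show "y \<in> K" unfolding K_def by blast
  qed
  hence "K = (\<Union>a\<in>A. {y. 1 *\<^sub>R (y + (c - a)) \<in> W})" by blast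
  thus "open K" by (simp only:) (intro open_UN ballI open_affine_vimage[OF W(1)])
  have "K = (\<lambda>x. x - c) ` {a + w | a w. a \<in> A \<and> w \<in> W}"
    unfolding K_def by (auto simp: image_iff algebra_simps) blast+
  moreover have "{a + w | a w. a \<in> A \<and> w \<in> W} = (\<Union>a\<in>A. \<Union>w\<in>W. {a + w})" by blast
  ultimately show "convex K" using convex_sums[OF A W(2)] convex_translation[of _ "- c"] by simp
qed

lemma separation_closed_convex:
  fixes A :: "'z set"
  assumes A: "closed A" "convex A" and b: "b \<notin> A"
  shows "\<exists>l::'z \<Rightarrow> real. linear l \<and> continuous_on UNIV l \<and> (\<exists>d>0. \<forall>a\<in>A. l a + d \<le> l b)"
proof (cases "A = {}")
  case True thus ?thesis by (intro exI[of _ "\<lambda>_. 0"]) (auto simp: linear_zero intro!: exI[of _ "1::real"])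
next
  case False
  then obtain a0 where a0: "a0 \<in> A" by blast
  obtain W where W: "open W" "convex W" "0 \<in> W" and WA: "\<And>w. w \<in> W \<Longrightarrow> b - w \<notin> A"
    using convex_open_nbhd_avoiding_closed[OF A(1) b] by blast
  define K where "K = {a - a0 + w | a w. a \<in> A \<and> w \<in> W}"
  have K: "open K" "convex K" using open_convex_thickening[OF A(2) W(1,2), of a0] unfolding K_def .
  have "0 \<in> K"
  proof -
    have "0 = a0 - a0 + 0" by simp
    thus ?thesis unfolding K_def using a0 W(3) by blast
  qed
  moreover have "b - a0 \<notin> K"
  proof
    assume "b - a0 \<in> K"
    then obtain a w where "a \<in> A" "w \<in> W" "b - a0 = a - a0 + w" unfolding K_def by blast
    thus False using WA[of w] by (simp add: algebra_simps)
  qed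
  ultimately obtain l :: "'z \<Rightarrow> real" where l: "linear l" "continuous_on UNIV l" "1 \<le> l (b - a0)"
      "\<And>k. k \<in> K \<Longrightarrow> l k < 1"
    using separation_open_convex[OF K] by blast
  obtain r where r: "r > 0" "r *\<^sub>R (b - a0) \<in> W" using open_scaleR_ray_gt[OF W(1), of 0] W(3) by auto
  have "l a + r * l (b - a0) \<le> l b" if "a \<in> A" for a
  proof -
    have "a - a0 + r *\<^sub>R (b - a0) \<in> K" unfolding K_def using that r(2) by blast
    hence "l (a - a0 + r *\<^sub>R (b - a0)) < 1" by (rule l(4))
    thus ?thesis using l(3) by (simp add: linear_add[OF l(1)] linear_diff[OF l(1)] linear_scale[OF l(1)])
  qed
  moreover have "r * l (b - a0) > 0" using r l(3) by simp
  ultimately show ?thesis using l(1,2) by (intro exI[of _ l] conjI exI[of _ "r * l (b - a0)"]) auto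
qed

end

section \<open>Scalarization\<close>

lemma linear_nonpos_on_cone_if_bdd_above:
  fixes l :: "'z::real_vector \<Rightarrow> real"
  assumes l: "linear l" and C: "cone C" and A: "setplus A C \<subseteq> A" "a0 \<in> A"
    and bdd: "\<And>a. a \<in> A \<Longrightarrow> l a \<le> m" and c: "c \<in> C"
  shows "l c \<le> 0"
proof (rule ccontr)
  assume "\<not> l c \<le> 0"
  hence pos: "0 < l c" by simp
  define t where "t = \<bar>(m - l a0) / l c\<bar> + 1"
  have "t *\<^sub>R c \<in> C" using C c unfolding t_def cone_def by simp
  hence "a0 + t *\<^sub>R c \<in> A" using A unfolding setplus_def by blast
  from bdd[OF this] have le: "l a0 + t * l c \<le> m" using l by (simp add: linear_add linear_scale)
  have "t * l c = \<bar>m - l a0\<bar> + l c" using pos by (simp add: t_def field_simps)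
  hence "m - l a0 < t * l c" using pos by linarith
  with le show False by simp
qed

lemma subset_if_scalarizations_le:
  fixes A B C :: "'z::{real_vector, t2_space} set"
  assumes lc: "lc_tvs TYPE('z)" and Cneg: "\<exists>zs\<in>neg_dual_cone C. zs \<noteq> (\<lambda>_. 0)"
    and C: "cone C" and A: "closed A" "convex A" "setplus A C \<subseteq> A"
    and le: "\<And>zs. zs \<in> neg_dual_cone C - {\<lambda>_. 0} \<Longrightarrow>
              Inf ((\<lambda>z. ereal (- zs z)) ` A) \<le> Inf ((\<lambda>z. ereal (- zs z)) ` B)"
  shows "B \<subseteq> A"
proof
  fix b assume bB: "b \<in> B"
  have Inf_B: "Inf ((\<lambda>z. ereal (- zs z)) ` B) \<le> ereal (- zs b)" for zs :: "'z \<Rightarrow> real"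
    using bB by (rule INF_lower)
  show "b \<in> A"
  proof (rule ccontr)
    assume bA: "b \<notin> A"
    show False
    proof (cases "A = {}")
      case True
      \<comment> \<open>the only place where a nonzero element of \<open>C\<^sup>-\<close> is needed: all scalarizations of \<open>{}\<close> are \<open>\<infinity>\<close>\<close>
      obtain zs where "zs \<in> neg_dual_cone C - {\<lambda>_. 0}" using Cneg by blast
      thus False using le[of zs] Inf_B[of zs] True by (simp add: top_ereal_def)
    next
      case False
      then obtain a0 where a0: "a0 \<in> A" by blast
      obtain l :: "'z \<Rightarrow> real" and d where l: "linear l" "continuous_on UNIV l"
          and d: "d > 0" "\<And>a. a \<in> A \<Longrightarrow> l a + d \<le> l b"
        using separation_closed_convex[OF lc A(1,2) bA] by blast
      have "l c \<le> 0" if "c \<in> C" for c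
        using linear_nonpos_on_cone_if_bdd_above[OF l(1) C A(3) a0 _ that, of "l b - d"] d(2)
        by (simp add: algebra_simps)
      moreover have "l \<noteq> (\<lambda>_. 0)" using d a0 by fastforce
      ultimately have "l \<in> neg_dual_cone C - {\<lambda>_. 0}"
        unfolding neg_dual_cone_def top_dual_def using l by blast
      moreover have "ereal (- l b + d) \<le> Inf ((\<lambda>z. ereal (- l z)) ` A)"
        by (rule INF_greatest) (use d(2) in force)
      ultimately have "ereal (- l b + d) \<le> ereal (- l b)"
        using le[of l] Inf_B[of l] order_trans by blast
      thus False using d(1) by simp
    qed
  qed
qed

lemma chord_weight:
  fixes s r :: real
  assumes s: "0 < s" "s < 1" and r: "0 < r"
  defines "lam \<equiv> (1 - s) / (1 - s + r * s)"
  shows "0 < lam" "lam < 1" "1 - lam = r * s / (1 - s + r * s)"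
    and "lam * ((1 - r) * s) + (1 - lam) * 1 = s"
proof -
  define L where "L = 1 - s + r * s"
  have L: "0 < L" "1 - s < L" "L - (1 - s) = r * s"
    using s mult_pos_pos[OF r s(1)] unfolding L_def by simp_all
  have lam_L: "lam = (1 - s) / L" unfolding lam_def L_def ..
  show "0 < lam" "lam < 1" using s L unfolding lam_L by simp_all
  have "1 - lam = (L - (1 - s)) / L" using L unfolding lam_L by (simp add: field_simps)
  thus "1 - lam = r * s / (1 - s + r * s)" using L(3) unfolding L_def by simp
  have "lam * ((1 - r) * s) + (1 - lam) * 1 = ((1 - s) * ((1 - r) * s) + (L - (1 - s))) / L"
    using L unfolding lam_L by (simp add: field_simps)
  also have "(1 - s) * ((1 - r) * s) + (L - (1 - s)) = s * L" unfolding L_def by (simp add: algebra_simps)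
  finally show "lam * ((1 - r) * s) + (1 - lam) * 1 = s" using L by simp
qed

text \<open>If \<open>H s > H 1\<close>, convexity along the chord from \<open>(1 - r) s\<close> to \<open>1\<close>, which passes
  through \<open>s\<close>, pushes \<open>H s\<close> strictly below its own value once the slope bound is tight enough.\<close>
lemma convex_ereal_le_endpoint:
  fixes H :: "real \<Rightarrow> ereal"
  assumes conv: "\<And>a b lam al be. 0 < lam \<Longrightarrow> lam < 1 \<Longrightarrow> H a < ereal al \<Longrightarrow> H b < ereal be \<Longrightarrow>
                   H (lam * a + (1 - lam) * b) < ereal (lam * al + (1 - lam) * be)"
    and H0: "H 0 < \<infinity>" and s: "0 < s" "s < 1"
    and slope: "\<And>h eps. H s = ereal h \<Longrightarrow> 0 < eps \<Longrightarrow> \<exists>r>0. H ((1 - r) * s) \<le> ereal (h + r * eps)"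
  shows "H s \<le> H 1"
proof (rule ccontr)
  assume "\<not> H s \<le> H 1"
  hence lt: "H 1 < H s" by simp
  have "H 0 \<noteq> \<infinity>" "H 1 \<noteq> \<infinity>" using H0 lt by auto
  then obtain a0 b1 where a0: "H 0 < ereal a0" and b1: "H 1 < ereal b1"
    using less_PInf_Ex_of_nat by blast
  have "H ((1 - s) * 0 + (1 - (1 - s)) * 1) < ereal ((1 - s) * a0 + (1 - (1 - s)) * b1)"
    using s a0 b1 by (intro conv) auto
  hence "H s < ereal ((1 - s) * a0 + s * b1)" by simp
  hence "H s < \<infinity>" by (rule less_trans) simp
  then obtain h where h: "H s = ereal h" using lt by (cases "H s") auto
  obtain h1 where h1: "h1 < h" "H 1 \<le> ereal h1"
  proof (cases "H 1")
    case (real h1) thus ?thesis using that[of h1] lt h by simp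
  next
    case MInf thus ?thesis using that[of "h - 1"] by simp
  qed (use lt in simp)
  define eps where "eps = s * (h - h1) / (2 * (1 - s))"
  have eps: "eps > 0" unfolding eps_def using s h1 by simp
  obtain r where r: "r > 0" "H ((1 - r) * s) \<le> ereal (h + r * eps)" using slope[OF h eps] by blast
  define L where "L = 1 - s + r * s"
  define lam where "lam = (1 - s) / L"
  define d where "d = r * s * (h - h1) / (2 * L)"
  have L: "L > 0" using s mult_pos_pos[OF r(1) s(1)] unfolding L_def by simp
  note lam = chord_weight[OF s r(1), folded L_def lam_def]
  have d: "d > 0" unfolding d_def using r s h1 L by simp
  have "H (lam * ((1 - r) * s) + (1 - lam) * 1) < ereal (lam * (h + r * eps + d) + (1 - lam) * (h1 + d))"
    using lam d le_less_trans[OF r(2)] le_less_trans[OF h1(2)] by (intro conv) auto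
  moreover have "lam * (h + r * eps + d) + (1 - lam) * (h1 + d) = h"
  proof -
    have lam_eps: "lam * (r * eps) = d" using L s unfolding lam_def eps_def d_def by (simp add: field_simps)
    have "lam * (h + r * eps + d) + (1 - lam) * (h1 + d) = h - (1 - lam) * (h - h1) + lam * (r * eps) + d"
      by (simp add: algebra_simps)
    also have "\<dots> = h - r * s / L * (h - h1) + 2 * d" unfolding lam(3) lam_eps by simp
    also have "\<dots> = h" using L unfolding d_def by (simp add: field_simps)
    finally show ?thesis .
  qed
  ultimately show False using h lam(4) by simp
qed

lemma closure_convex_hull_subset_halfspace:
  fixes zs :: "'z::{real_vector, topological_space} \<Rightarrow> real"
  assumes zs: "linear zs" "continuous_on UNIV zs" and S: "S \<subseteq> {q. zs q \<le> c}"
  shows "closure (convex hull S) \<subseteq> {q. zs q \<le> c}"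
proof (rule closure_minimal[OF hull_minimal[OF S]])
  show "convex {q. zs q \<le> c}"
  proof (rule convexI)
    fix a b and u v :: real assume "a \<in> {q. zs q \<le> c}" "b \<in> {q. zs q \<le> c}" "0 \<le> u" "0 \<le> v" "u + v = 1"
    hence "u * zs a + v * zs b \<le> u * c + v * c" by (intro add_mono mult_left_mono) auto
    thus "u *\<^sub>R a + v *\<^sub>R b \<in> {q. zs q \<le> c}"
      using \<open>u + v = 1\<close> zs(1) by (simp add: linear_add linear_scale distrib_right[symmetric])
  qed
  show "closed {q. zs q \<le> c}" using closed_Collect_le[OF zs(2) continuous_on_const] by simp
qed

text \<open>The scalar counterpart of \<open>\<phi>'(y, u) \<le> 0\<close>: difference quotients of the scalarization
  along \<open>u\<close> come arbitrarily close to nonpositive values; it says nothing where \<open>\<phi>(y)\<close> is infinite.\<close>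
definition scal_slope_nonpos :: "('x::real_vector \<Rightarrow> 'z set) \<Rightarrow> ('z \<Rightarrow> real) \<Rightarrow> 'x \<Rightarrow> 'x \<Rightarrow> bool" where
  "scal_slope_nonpos f zs y u \<longleftrightarrow> (\<forall>h eps. scal f zs y = ereal h \<longrightarrow> 0 < eps \<longrightarrow>
     (\<exists>r>0. scal f zs (y + r *\<^sub>R u) \<le> ereal (h + r * eps)))"

lemma scal_slope_nonpos_if_zero_in_dderiv:
  fixes f :: "'x::real_vector \<Rightarrow> 'z::{real_vector, t2_space} set"
  assumes zs: "linear zs" "continuous_on UNIV zs" and D: "0 \<in> dderiv_G f y u"
  shows "scal_slope_nonpos f zs y u"
  unfolding scal_slope_nonpos_def
proof (intro allI impI)
  fix h eps :: real assume h: "scal f zs y = ereal h" and eps: "0 < eps"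
  show "\<exists>r>0. scal f zs (y + r *\<^sub>R u) \<le> ereal (h + r * eps)"
  proof (rule ccontr)
    assume no_r: "\<not> (\<exists>r>0. scal f zs (y + r *\<^sub>R u) \<le> ereal (h + r * eps))"
    have big: "ereal (h + t * eps) < scal f zs (y + t *\<^sub>R u)" if "0 < t" for t
      using no_r that not_le by blast
    define S where "S = (\<Union>t\<in>{0<..<1::real}. scaleG (1 / t) (ominusG (f (y + t *\<^sub>R u)) (f y)))"
    have "zs q \<le> - eps" if "q \<in> S" for q
    proof (rule ccontr)
      assume "\<not> zs q \<le> - eps"
      obtain t w where t: "0 < t" and w: "w \<in> ominusG (f (y + t *\<^sub>R u)) (f y)" and q: "q = (1 / t) *\<^sub>R w"
        using \<open>q \<in> S\<close> unfolding S_def scaleG_def by auto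
      have "zs w = t * zs q" using q t zs(1) by (simp add: linear_scale)
      hence "0 < t * eps + zs w" using \<open>\<not> zs q \<le> - eps\<close> t
        by (simp add: distrib_left[symmetric])
      hence "scal f zs y < ereal (h + t * eps + zs w)" using h by simp
      then obtain a where a: "a \<in> f y" "- zs a < h + t * eps + zs w"
        unfolding scal_def INF_less_iff by auto
      have "a + w \<in> f (y + t *\<^sub>R u)" using w a(1) unfolding ominusG_def setplus_def by auto
      hence "scal f zs (y + t *\<^sub>R u) \<le> ereal (- zs (a + w))" unfolding scal_def by (rule INF_lower)
      also have "\<dots> < ereal (h + t * eps)" using a(2) zs(1) by (simp add: linear_add)
      finally show False using big[OF t] by simp
    qed
    hence "closure (convex hull S) \<subseteq> {q. zs q \<le> - eps}"
      by (intro closure_convex_hull_subset_halfspace[OF zs]) auto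
    moreover have "0 \<in> closure (convex hull S)" using D unfolding dderiv_G_def S_def by (rule INT_D) simp
    ultimately show False using eps zs(1) by (auto simp: linear_0)
  qed
qed

lemma scal_slope_nonpos_if_scal_dderiv_nonpos:
  assumes D: "scal_dderiv f zs y u \<le> 0"
  shows "scal_slope_nonpos f zs y u"
  unfolding scal_slope_nonpos_def
proof (intro allI impI)
  fix h eps :: real assume h: "scal f zs y = ereal h" and eps: "0 < eps"
  have "scal_dderiv f zs y u < ereal eps" using D eps by (simp add: le_less_trans)
  then obtain t where t: "0 < t"
    and lt: "ereal (1 / t) * iminus (scal f zs (y + t *\<^sub>R u)) (ereal h) < ereal eps"
    unfolding scal_dderiv_def Inf_less_iff h by blast
  have "iminus (scal f zs (y + t *\<^sub>R u)) (ereal h) < ereal (t * eps)"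
  proof (cases "iminus (scal f zs (y + t *\<^sub>R u)) (ereal h)")
    case (real i)
    thus ?thesis using lt t by (simp add: divide_less_eq mult.commute)
  qed (use lt t in auto)
  then obtain tau where "scal f zs (y + t *\<^sub>R u) \<le> iplus (ereal h) (ereal tau)" "tau < t * eps"
    unfolding iminus_def Inf_less_iff by auto
  hence "scal f zs (y + t *\<^sub>R u) \<le> ereal (h + t * eps)" unfolding iplus_def by (simp add: order_trans)
  thus "\<exists>r>0. scal f zs (y + r *\<^sub>R u) \<le> ereal (h + r * eps)" using t by blast
qed

lemma scal_convex_less:
  fixes f :: "'x::real_vector \<Rightarrow> 'z::{real_vector, t2_space} set"
  assumes fconv: "convex_G_fun f" and zs: "linear zs" and lam: "0 < lam" "lam < 1"
    and y1: "scal f zs y1 < ereal al" and y2: "scal f zs y2 < ereal be"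
  shows "scal f zs (lam *\<^sub>R y1 + (1 - lam) *\<^sub>R y2) < ereal (lam * al + (1 - lam) * be)"
proof -
  obtain z1 where z1: "z1 \<in> f y1" "- zs z1 < al" using y1 unfolding scal_def INF_less_iff by auto
  obtain z2 where z2: "z2 \<in> f y2" "- zs z2 < be" using y2 unfolding scal_def INF_less_iff by auto
  have "lam *\<^sub>R z1 + (1 - lam) *\<^sub>R z2 \<in> setplus (scaleG lam (f y1)) (scaleG (1 - lam) (f y2))"
    unfolding setplus_def scaleG_def using z1 z2 by blast
  hence "lam *\<^sub>R z1 + (1 - lam) *\<^sub>R z2 \<in> oplusG (scaleG lam (f y1)) (scaleG (1 - lam) (f y2))"
    unfolding oplusG_def using closure_subset by blast
  hence "lam *\<^sub>R z1 + (1 - lam) *\<^sub>R z2 \<in> f (lam *\<^sub>R y1 + (1 - lam) *\<^sub>R y2)"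
    using fconv lam unfolding convex_G_fun_def by blast
  hence "scal f zs (lam *\<^sub>R y1 + (1 - lam) *\<^sub>R y2) \<le> ereal (- zs (lam *\<^sub>R z1 + (1 - lam) *\<^sub>R z2))"
    unfolding scal_def by (rule INF_lower)
  also have "- zs (lam *\<^sub>R z1 + (1 - lam) *\<^sub>R z2) = lam * (- zs z1) + (1 - lam) * (- zs z2)"
    using zs by (simp add: linear_add linear_scale)
  also have "\<dots> < lam * al + (1 - lam) * be"
    using lam z1 z2 by (intro add_strict_mono mult_strict_left_mono) auto
  finally show ?thesis by simp
qed

lemma scal_segment_le:
  fixes f :: "'x::real_vector \<Rightarrow> 'z::{real_vector, t2_space} set"
  assumes fconv: "convex_G_fun f" and zs: "linear zs" and x0: "scal f zs x0 < \<infinity>"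
    and s: "0 < s" "s < 1"
    and slope: "scal_slope_nonpos f zs (x0 + s *\<^sub>R (x - x0)) (x0 - (x0 + s *\<^sub>R (x - x0)))"
  shows "scal f zs (x0 + s *\<^sub>R (x - x0)) \<le> scal f zs x"
proof -
  define H where "H t = scal f zs (x0 + t *\<^sub>R (x - x0))" for t
  have "H s \<le> H 1"
  proof (rule convex_ereal_le_endpoint[OF _ _ s])
    fix a b lam al be :: real
    assume "0 < lam" "lam < 1" "H a < ereal al" "H b < ereal be"
    from scal_convex_less[OF fconv zs this[unfolded H_def]]
    have "scal f zs (lam *\<^sub>R (x0 + a *\<^sub>R (x - x0)) + (1 - lam) *\<^sub>R (x0 + b *\<^sub>R (x - x0)))
        < ereal (lam * al + (1 - lam) * be)" .
    moreover have "x0 + (lam * a + (1 - lam) * b) *\<^sub>R (x - x0)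
        = lam *\<^sub>R (x0 + a *\<^sub>R (x - x0)) + (1 - lam) *\<^sub>R (x0 + b *\<^sub>R (x - x0))"
      by (simp add: algebra_simps)
    ultimately show "H (lam * a + (1 - lam) * b) < ereal (lam * al + (1 - lam) * be)"
      unfolding H_def by (simp only:)
  next
    show "H 0 < \<infinity>" using x0 unfolding H_def by simp
  next
    fix h eps :: real assume "H s = ereal h" "0 < eps"
    then obtain r where "r > 0"
      "scal f zs (x0 + s *\<^sub>R (x - x0) + r *\<^sub>R (x0 - (x0 + s *\<^sub>R (x - x0)))) \<le> ereal (h + r * eps)"
      using slope unfolding scal_slope_nonpos_def H_def by blast
    moreover have "x0 + s *\<^sub>R (x - x0) + r *\<^sub>R (x0 - (x0 + s *\<^sub>R (x - x0)))
        = x0 + ((1 - r) * s) *\<^sub>R (x - x0)" by (simp add: algebra_simps)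
    ultimately have "H ((1 - r) * s) \<le> ereal (h + r * eps)" unfolding H_def by (simp only:)
    thus "\<exists>r>0. H ((1 - r) * s) \<le> ereal (h + r * eps)" using \<open>r > 0\<close> by blast
  qed
  thus ?thesis unfolding H_def by simp
qed

section \<open>Minimizers of convex set-valued functions\<close>

lemma closed_inG: "inG C A \<Longrightarrow> closed A"
  unfolding inG_def by (metis closed_closure)

lemma convex_inG: "lc_tvs TYPE('z) \<Longrightarrow> inG C A \<Longrightarrow> convex (A::'z::{real_vector, t2_space} set)"
  unfolding inG_def by (metis convex_closure_lc convex_convex_hull)

lemma setplus_cone_subset_inG: "inG C A \<Longrightarrow> setplus A C \<subseteq> A"
  unfolding inG_def by (metis closure_subset hull_subset subset_trans)

lemma subset_closure_convex_hull: "S \<subseteq> closure (convex hull S)"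
  using hull_subset closure_subset by (metis subset_trans)

lemma inf_G_eq_iff_upper_bound:
  assumes "closed (f x0)" "convex (f x0)"
  shows "f x0 = inf_G f \<longleftrightarrow> (\<forall>x. f x \<subseteq> f x0)"
proof -
  have "f x \<subseteq> inf_G f" for x
    unfolding inf_G_def using subset_closure_convex_hull[of "\<Union>x. f x"] by auto
  moreover have "inf_G f \<subseteq> f x0" if "\<forall>x. f x \<subseteq> f x0"
    unfolding inf_G_def using assms that by (intro closure_minimal hull_minimal) auto
  ultimately show ?thesis by blast
qed

lemma recc_subset_dderiv_at_minimizer:
  assumes fconv: "convex_G_fun f" and min: "\<And>y. f y \<subseteq> f x0"
  shows "recc (f x0) \<subseteq> dderiv_G f x (x0 - x)"
proof
  fix z assume "z \<in> recc (f x0)"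
  hence z: "a + z \<in> f x0" if "a \<in> f x0" for a
    using that unfolding recc_def setplus_def by (auto split: if_splits)
  have "z \<in> scaleG (1 / t) (ominusG (f (x + t *\<^sub>R (x0 - x))) (f x))" if t: "0 < t" "t < 1" for t
  proof -
    have "a + t *\<^sub>R z \<in> f (x + t *\<^sub>R (x0 - x))" if a: "a \<in> f x" for a
    proof -
      have "t *\<^sub>R (a + z) + (1 - t) *\<^sub>R a \<in> setplus (scaleG t (f x0)) (scaleG (1 - t) (f x))"
        unfolding setplus_def scaleG_def using z min a by blast
      hence "t *\<^sub>R (a + z) + (1 - t) *\<^sub>R a \<in> f (t *\<^sub>R x0 + (1 - t) *\<^sub>R x)"
        using fconv t closure_subset unfolding convex_G_fun_def oplusG_def by blast
      moreover have "t *\<^sub>R (a + z) + (1 - t) *\<^sub>R a = a + t *\<^sub>R z"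
        "t *\<^sub>R x0 + (1 - t) *\<^sub>R x = x + t *\<^sub>R (x0 - x)" by (simp_all add: algebra_simps)
      ultimately show ?thesis by simp
    qed
    hence "t *\<^sub>R z \<in> ominusG (f (x + t *\<^sub>R (x0 - x))) (f x)"
      unfolding ominusG_def setplus_def by blast
    hence "(1 / t) *\<^sub>R (t *\<^sub>R z) \<in> scaleG (1 / t) (ominusG (f (x + t *\<^sub>R (x0 - x))) (f x))"
      unfolding scaleG_def by blast
    thus ?thesis using t by simp
  qed
  hence "z \<in> (\<Union>t\<in>{0<..<t0}. scaleG (1 / t) (ominusG (f (x + t *\<^sub>R (x0 - x))) (f x)))" if "0 < t0" for t0
    using that by (intro UN_I[of "min (t0 / 2) (1 / 2)"]) auto
  thus "z \<in> dderiv_G f x (x0 - x)"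
    unfolding dderiv_G_def using subset_closure_convex_hull by blast
qed

lemma lattice_lsc_at_minimizer:
  assumes "closed (f x0)" "convex (f x0)" and min: "\<And>y. f y \<subseteq> f x0"
  shows "(\<Inter>t0\<in>{0<..<1}. closure (convex hull (\<Union>t\<in>{0..<t0}. f (x0 + t *\<^sub>R (x - x0))))) \<subseteq> f x0"
proof (rule subset_trans[OF INT_lower[of "1 / 2"]])
  show "closure (convex hull (\<Union>t\<in>{0..<1/2}. f (x0 + t *\<^sub>R (x - x0)))) \<subseteq> f x0"
    using assms by (intro closure_minimal hull_minimal) auto
qed simp

lemma subset_lattice_liminf_if_segment_subset:
  assumes "\<And>s. 0 < s \<Longrightarrow> s < 1 \<Longrightarrow> f x \<subseteq> f (x0 + s *\<^sub>R (x - x0))"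
  shows "f x \<subseteq> (\<Inter>t0\<in>{0<..<1}. closure (convex hull (\<Union>t\<in>{0..<t0}. f (x0 + t *\<^sub>R (x - x0)))))"
proof (intro INT_greatest)
  fix t0 :: real assume "t0 \<in> {0<..<1}"
  hence "f x \<subseteq> f (x0 + (t0 / 2) *\<^sub>R (x - x0))" "t0 / 2 \<in> {0..<t0}" using assms[of "t0 / 2"] by auto
  hence "f x \<subseteq> (\<Union>t\<in>{0..<t0}. f (x0 + t *\<^sub>R (x - x0)))" by blast
  thus "f x \<subseteq> closure (convex hull (\<Union>t\<in>{0..<t0}. f (x0 + t *\<^sub>R (x - x0))))"
    using subset_closure_convex_hull by blast
qed

lemma Liminf_at_0_le_if_right_le:
  fixes g :: "real \<Rightarrow> ereal"
  assumes "\<And>t. 0 < t \<Longrightarrow> t < 1 \<Longrightarrow> g t \<le> c"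
  shows "Liminf (at 0) g \<le> c"
proof (rule Liminf_least)
  fix P assume "eventually P (at (0::real))"
  then obtain d where d: "d > 0" "\<And>y. y \<noteq> 0 \<Longrightarrow> dist y 0 < d \<Longrightarrow> P y"
    unfolding eventually_at by auto
  define t where "t = min (d / 2) (1 / 2)"
  have t: "0 < t" "t < 1" "t < d" unfolding t_def using d by auto
  hence "Inf (g ` Collect P) \<le> g t" using d(2)[of t] by (intro INF_lower) simp
  thus "Inf (g ` Collect P) \<le> c" using assms t by (meson order_trans)
qed

lemma zero_in_recc: "A \<noteq> {} \<Longrightarrow> 0 \<in> recc A"
  unfolding recc_def setplus_def by simp

lemma scal_less_PInf:
  assumes "x \<in> dom_G f" shows "scal f zs x < \<infinity>"
proof -
  obtain a where "a \<in> f x" using assms unfolding dom_G_def by blast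
  hence "scal f zs x \<le> ereal (- zs a)" unfolding scal_def by (rule INF_lower)
  thus ?thesis by (rule le_less_trans) simp
qed

lemma neg_dual_coneD: "zs \<in> neg_dual_cone C \<Longrightarrow> linear zs \<and> continuous_on UNIV zs"
  unfolding neg_dual_cone_def top_dual_def by blast

lemma value_subset_if_scalarizations_le:
  fixes f :: "'x \<Rightarrow> 'z::{real_vector, t2_space} set"
  assumes lc: "lc_tvs TYPE('z)" and Cneg: "\<exists>zs\<in>neg_dual_cone C. zs \<noteq> (\<lambda>_. 0)"
    and C: "cone C" and fG: "inG C (f y)"
    and le: "\<And>zs. zs \<in> neg_dual_cone C - {\<lambda>_. 0} \<Longrightarrow> scal f zs y \<le> scal f zs x"
  shows "f x \<subseteq> f y"
  by (rule subset_if_scalarizations_le[OF lc Cneg C closed_inG[OF fG] convex_inG[OF lc fG]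
        setplus_cone_subset_inG[OF fG] le[unfolded scal_def]])

lemma minimizer_if_minty_and_lsc:
  fixes f :: "'x::real_vector \<Rightarrow> 'z::{real_vector, t2_space} set"
  assumes lc: "lc_tvs TYPE('z)" and Cneg: "\<exists>zs\<in>neg_dual_cone C. zs \<noteq> (\<lambda>_. 0)"
    and C: "cone C" and fG: "\<forall>x. inG C (f x)" and fconv: "convex_G_fun f" and x0: "x0 \<in> dom_G f"
    and minty: "\<forall>x. recc (f x0) \<subseteq> dderiv_G f x (x0 - x)"
    and lsc: "\<forall>x. (\<Inter>t0\<in>{0<..<1}. closure (convex hull
                  (\<Union>t\<in>{0..<t0}. f (x0 + t *\<^sub>R (x - x0))))) \<subseteq> f x0"
  shows "f x \<subseteq> f x0"
proof -
  have "f x \<subseteq> f (x0 + s *\<^sub>R (x - x0))" if s: "0 < s" "s < 1" for s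
  proof (rule value_subset_if_scalarizations_le[where f = f, OF lc Cneg C spec[OF fG]])
    fix zs assume "zs \<in> neg_dual_cone C - {\<lambda>_. 0}"
    hence zs: "linear zs" "continuous_on UNIV zs" using neg_dual_coneD by blast+
    have "0 \<in> recc (f x0)" using x0 zero_in_recc unfolding dom_G_def by blast
    hence "0 \<in> dderiv_G f y (x0 - y)" for y using minty by blast
    thus "scal f zs (x0 + s *\<^sub>R (x - x0)) \<le> scal f zs x"
      by (intro scal_segment_le[OF fconv zs(1) scal_less_PInf[OF x0] s]
          scal_slope_nonpos_if_zero_in_dderiv[OF zs])
  qed
  thus ?thesis by (rule subset_trans[OF subset_lattice_liminf_if_segment_subset spec[OF lsc]])
qed

lemma minimizer_if_scalar_minty_and_lsc:
  fixes f :: "'x::real_vector \<Rightarrow> 'z::{real_vector, t2_space} set"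
  assumes lc: "lc_tvs TYPE('z)" and Cneg: "\<exists>zs\<in>neg_dual_cone C. zs \<noteq> (\<lambda>_. 0)"
    and C: "cone C" and fG: "\<forall>x. inG C (f x)" and fconv: "convex_G_fun f" and x0: "x0 \<in> dom_G f"
    and minty: "\<forall>x. \<forall>zs\<in>neg_dual_cone C - {\<lambda>_. 0}. scal_dderiv f zs x (x0 - x) \<le> 0"
    and lsc: "\<forall>x. \<forall>zs\<in>neg_dual_cone C - {\<lambda>_. 0}.
              (let g = (\<lambda>t::real. if t \<in> {0..1} then scal f zs (x0 + t *\<^sub>R (x - x0)) else \<infinity>)
               in g 0 \<le> Liminf (at 0) g)"
  shows "f x \<subseteq> f x0"
proof (rule value_subset_if_scalarizations_le[where f = f, OF lc Cneg C spec[OF fG]])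
  fix zs assume zs: "zs \<in> neg_dual_cone C - {\<lambda>_. 0}"
  define g where "g = (\<lambda>t::real. if t \<in> {0..1} then scal f zs (x0 + t *\<^sub>R (x - x0)) else \<infinity>)"
  have "g 0 \<le> Liminf (at 0) g" using bspec[OF spec[OF lsc, of x] zs] unfolding g_def Let_def .
  also have "Liminf (at 0) g \<le> scal f zs x"
  proof (rule Liminf_at_0_le_if_right_le)
    fix s :: real assume s: "0 < s" "s < 1"
    have "linear zs" using zs neg_dual_coneD by blast
    hence "scal f zs (x0 + s *\<^sub>R (x - x0)) \<le> scal f zs x"
      by (rule scal_segment_le[OF fconv _ scal_less_PInf[OF x0] s
          scal_slope_nonpos_if_scal_dderiv_nonpos[OF bspec[OF spec[OF minty] zs]]])
    thus "g s \<le> scal f zs x" using s unfolding g_def by simp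
  qed
  finally show "scal f zs x0 \<le> scal f zs x" unfolding g_def by simp
qed

theorem mainTheorem2:
  fixes f :: "'x::real_vector \<Rightarrow> 'z::{real_vector, t2_space} set"
    and C :: "'z set" and x0 :: 'x
  assumes Z: "lc_tvs TYPE('z)"
    and C: "closed C" "convex C" "cone C" "0 \<in> C"
    and Cneg: "\<exists>zs\<in>neg_dual_cone C. zs \<noteq> (\<lambda>_. 0)"
    and fG: "\<forall>x. inG C (f x)"
    and fconv: "convex_G_fun f"
    and x0: "x0 \<in> dom_G f"
  shows "(f x0 = inf_G f \<longleftrightarrow>
            (\<forall>x. recc (f x0) \<subseteq> dderiv_G f x (x0 - x)) \<and>
            (\<forall>x. (\<Inter>t0\<in>{0<..<1}. closure (convex hull
                    (\<Union>t\<in>{0..<t0}. f (x0 + t *\<^sub>R (x - x0))))) \<subseteq> f x0))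
       \<and> ((\<forall>x. \<forall>zs\<in>neg_dual_cone C - {\<lambda>_. 0}. scal_dderiv f zs x (x0 - x) \<le> 0) \<and>
          (\<forall>x. \<forall>zs\<in>neg_dual_cone C - {\<lambda>_. 0}.
              (let g = (\<lambda>t::real. if t \<in> {0..1} then scal f zs (x0 + t *\<^sub>R (x - x0)) else \<infinity>)
               in g 0 \<le> Liminf (at 0) g))
          \<longrightarrow> f x0 = inf_G f)"
proof -
  have fx0: "closed (f x0)" "convex (f x0)"
    using fG closed_inG convex_inG[OF Z] by blast+
  note minimizer_iff = inf_G_eq_iff_upper_bound[where f = f, OF fx0]
  show ?thesis
    unfolding minimizer_iff
    using recc_subset_dderiv_at_minimizer[OF fconv] lattice_lsc_at_minimizer[where f = f, OF fx0]
      minimizer_if_minty_and_lsc[OF Z Cneg C(3) fG fconv x0]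
      minimizer_if_scalar_minty_and_lsc[OF Z Cneg C(3) fG fconv x0]
    by (intro conjI iffI impI allI) blast+
qed

end
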